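(* Let $\gamma:\mathrm{Cl}(V,h)\to\mathrm{End}_\mathbb{C}(S)$ and $\gamma':\mathrm{Cl}(V',h')\to\mathrm{End}_\mathbb{C}(S')$ be weakly-faithful complex Clifford representations. Then any isomorphism $(\varphi_0,\varphi):\gamma\to\gamma'$ of complex Clifford representations is determined by the linear isomorphism $\varphi:S\to S'$: we have $\mathrm{Ad}(\varphi)(\gamma(V))=\gamma'(V')$ and $\varphi_0=(\gamma'|_{V'})^{-1}\circ\mathrm{Ad}(\varphi)\circ\gamma|_V$. Conversely, any $\mathbb{C}$-linear isomorphism $\varphi:S\to S'$ satisfying $\mathrm{Ad}(\varphi)(\gamma(V))=\gamma'(V')$ determines an isomorphism of quadratic spaces $\varphi_0:(V,h)\to(V',h')$ through $\varphi_0=(\gamma'|_{V'})^{-1}\circ\mathrm{Ad}(\varphi)\circ\gamma|_V$, and $(\varphi_0,\varphi)$ is an isomorphism of complex Clifford representations from $\gamma$ to $\gamma'$.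
   Context: Real quadratic spaces $(V,h)$ are finite-dimensional real vector spaces with non-degenerate symmetric bilinear forms; $\mathrm{Cl}(V,h)$ is the real Clifford algebra, and an isometry $\varphi_0$ induces the unique unital algebra morphism $\mathrm{Cl}(\varphi_0)$ extending it. A complex Clifford representation is a unital morphism of real algebras $\gamma:\mathrm{Cl}(V,h)\to\mathrm{End}_\mathbb{C}(S)$, $S$ a finite-dimensional complex vector space; it is weakly-faithful if $\gamma|_V:V\to\mathrm{End}_\mathbb{C}(S)$ is injective. A morphism from $\gamma$ to $\gamma'$ is a pair $(\varphi_0,\varphi)$, $\varphi_0:(V,h)\to(V',h')$ an isometry and $\varphi:S\to S'$ $\mathbb{C}$-linear, with $\gamma'(\mathrm{Cl}(\varphi_0)(x))\circ\varphi=\varphi\circ\gamma(x)$ for all $x\in\mathrm{Cl}(V,h)$; it is an isomorphism iff $\varphi_0$ and $\varphi$ are bijective. $\mathrm{Ad}(\varphi)(A)=\varphi\circ A\circ\varphi^{-1}$. *)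

theory Defs
  imports "HOL-Analysis.Analysis"
begin

text \<open>A real quadratic space (V,h): V is a finite-dimensional real vector space (the whole
type, of class real_vector, required to be spanned by a finite set) and h a non-degenerate symmetric bilinear form.\<close>

definition quadratic_space :: "('v::real_vector \<Rightarrow> 'v \<Rightarrow> real) \<Rightarrow> bool" where
  "quadratic_space h \<longleftrightarrow> (\<exists>B. finite B \<and> span B = (UNIV :: 'v set)) \<and>
     (\<forall>x. linear (h x)) \<and> (\<forall>x y. h x y = h y x) \<and> (\<forall>x. (\<forall>y. h x y = 0) \<longrightarrow> x = 0)"

definition isometry ::
  "('v::real_vector \<Rightarrow> 'v \<Rightarrow> real) \<Rightarrow> ('w::real_vector \<Rightarrow> 'w \<Rightarrow> real) \<Rightarrow> ('v \<Rightarrow> 'w) \<Rightarrow> bool" where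
  "isometry h h' f \<longleftrightarrow> linear f \<and> (\<forall>x y. h' (f x) (f y) = h x y)"

text \<open>Free real algebra on the set V: finitely supported functions on words.\<close>

definition free_alg :: "('v list \<Rightarrow> real) set" where
  "free_alg = {f. finite {w. f w \<noteq> 0}}"

definition fa_add :: "('v list \<Rightarrow> real) \<Rightarrow> ('v list \<Rightarrow> real) \<Rightarrow> ('v list \<Rightarrow> real)" where
  "fa_add f g = (\<lambda>w. f w + g w)"

definition fa_scale :: "real \<Rightarrow> ('v list \<Rightarrow> real) \<Rightarrow> ('v list \<Rightarrow> real)" where
  "fa_scale r f = (\<lambda>w. r * f w)"

definition fa_mult :: "('v list \<Rightarrow> real) \<Rightarrow> ('v list \<Rightarrow> real) \<Rightarrow> ('v list \<Rightarrow> real)" where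
  "fa_mult f g = (\<lambda>w. \<Sum>i\<le>length w. f (take i w) * g (drop i w))"

definition fa_word :: "'v list \<Rightarrow> ('v list \<Rightarrow> real)" where
  "fa_word u = (\<lambda>w. if w = u then 1 else 0)"

text \<open>Two-sided ideal generated by the linearity relations (turning the free algebra into the
tensor algebra T(V)) and the Clifford relations v \<otimes> v - h(v,v) 1.\<close>

inductive_set cl_ideal :: "('v::real_vector \<Rightarrow> 'v \<Rightarrow> real) \<Rightarrow> ('v list \<Rightarrow> real) set"
  for h :: "'v \<Rightarrow> 'v \<Rightarrow> real" where
  gen_add: "fa_add (fa_word [x + y]) (fa_scale (-1) (fa_add (fa_word [x]) (fa_word [y]))) \<in> cl_ideal h"
| gen_scale: "fa_add (fa_word [scaleR a x]) (fa_scale (- a) (fa_word [x])) \<in> cl_ideal h"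
| gen_cliff: "fa_add (fa_word [x, x]) (fa_scale (- h x x) (fa_word [])) \<in> cl_ideal h"
| zero: "(\<lambda>w. 0) \<in> cl_ideal h"
| add: "f \<in> cl_ideal h \<Longrightarrow> g \<in> cl_ideal h \<Longrightarrow> fa_add f g \<in> cl_ideal h"
| scale: "f \<in> cl_ideal h \<Longrightarrow> fa_scale r f \<in> cl_ideal h"
| lmult: "f \<in> cl_ideal h \<Longrightarrow> g \<in> free_alg \<Longrightarrow> fa_mult g f \<in> cl_ideal h"
| rmult: "f \<in> cl_ideal h \<Longrightarrow> g \<in> free_alg \<Longrightarrow> fa_mult f g \<in> cl_ideal h"

definition cl_class :: "('v::real_vector \<Rightarrow> 'v \<Rightarrow> real) \<Rightarrow> ('v list \<Rightarrow> real) \<Rightarrow> ('v list \<Rightarrow> real) set" where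
  "cl_class h f = {g \<in> free_alg. fa_add f (fa_scale (-1) g) \<in> cl_ideal h}"

definition Cl :: "('v::real_vector \<Rightarrow> 'v \<Rightarrow> real) \<Rightarrow> ('v list \<Rightarrow> real) set set" where
  "Cl h = cl_class h ` free_alg"

definition cl_rep :: "('v list \<Rightarrow> real) set \<Rightarrow> ('v list \<Rightarrow> real)" where
  "cl_rep X = (SOME f. f \<in> X)"

definition cl_add :: "('v::real_vector \<Rightarrow> 'v \<Rightarrow> real) \<Rightarrow> ('v list \<Rightarrow> real) set \<Rightarrow> ('v list \<Rightarrow> real) set \<Rightarrow> ('v list \<Rightarrow> real) set" where
  "cl_add h X Y = cl_class h (fa_add (cl_rep X) (cl_rep Y))"

definition cl_mult :: "('v::real_vector \<Rightarrow> 'v \<Rightarrow> real) \<Rightarrow> ('v list \<Rightarrow> real) set \<Rightarrow> ('v list \<Rightarrow> real) set \<Rightarrow> ('v list \<Rightarrow> real) set" where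
  "cl_mult h X Y = cl_class h (fa_mult (cl_rep X) (cl_rep Y))"

definition cl_scale :: "('v::real_vector \<Rightarrow> 'v \<Rightarrow> real) \<Rightarrow> real \<Rightarrow> ('v list \<Rightarrow> real) set \<Rightarrow> ('v list \<Rightarrow> real) set" where
  "cl_scale h r X = cl_class h (fa_scale r (cl_rep X))"

definition cl_one :: "('v::real_vector \<Rightarrow> 'v \<Rightarrow> real) \<Rightarrow> ('v list \<Rightarrow> real) set" where
  "cl_one h = cl_class h (fa_word [])"

definition cl_iota :: "('v::real_vector \<Rightarrow> 'v \<Rightarrow> real) \<Rightarrow> 'v \<Rightarrow> ('v list \<Rightarrow> real) set" where
  "cl_iota h v = cl_class h (fa_word [v])"

definition cl_alg_hom ::
  "('v::real_vector \<Rightarrow> 'v \<Rightarrow> real) \<Rightarrow> ('w::real_vector \<Rightarrow> 'w \<Rightarrow> real)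
   \<Rightarrow> (('v list \<Rightarrow> real) set \<Rightarrow> ('w list \<Rightarrow> real) set) \<Rightarrow> bool" where
  "cl_alg_hom h h' \<Phi> \<longleftrightarrow>
     (\<forall>X\<in>Cl h. \<Phi> X \<in> Cl h') \<and>
     (\<forall>X\<in>Cl h. \<forall>Y\<in>Cl h. \<Phi> (cl_add h X Y) = cl_add h' (\<Phi> X) (\<Phi> Y)) \<and>
     (\<forall>X\<in>Cl h. \<forall>Y\<in>Cl h. \<Phi> (cl_mult h X Y) = cl_mult h' (\<Phi> X) (\<Phi> Y)) \<and>
     (\<forall>r. \<forall>X\<in>Cl h. \<Phi> (cl_scale h r X) = cl_scale h' r (\<Phi> X)) \<and>
     \<Phi> (cl_one h) = cl_one h' \<and>
     (\<forall>X. X \<notin> Cl h \<longrightarrow> \<Phi> X = undefined)"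

definition cl_map ::
  "('v::real_vector \<Rightarrow> 'v \<Rightarrow> real) \<Rightarrow> ('w::real_vector \<Rightarrow> 'w \<Rightarrow> real) \<Rightarrow> ('v \<Rightarrow> 'w)
   \<Rightarrow> (('v list \<Rightarrow> real) set \<Rightarrow> ('w list \<Rightarrow> real) set)" where
  "cl_map h h' \<phi>0 = (THE \<Phi>. cl_alg_hom h h' \<Phi> \<and> (\<forall>v. \<Phi> (cl_iota h v) = cl_iota h' (\<phi>0 v)))"

text \<open>A finite-dimensional complex vector space: a type with a complex scalar multiplication sc.\<close>
definition fd_complex_space :: "(complex \<Rightarrow> 's::ab_group_add \<Rightarrow> 's) \<Rightarrow> bool" where
  "fd_complex_space sc \<longleftrightarrow> (\<exists>B. finite_dimensional_vector_space sc B)"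

definition clifford_rep ::
  "('v::real_vector \<Rightarrow> 'v \<Rightarrow> real) \<Rightarrow> (complex \<Rightarrow> 's::ab_group_add \<Rightarrow> 's)
   \<Rightarrow> (('v list \<Rightarrow> real) set \<Rightarrow> ('s \<Rightarrow> 's)) \<Rightarrow> bool" where
  "clifford_rep h sc \<gamma> \<longleftrightarrow>
     (\<forall>X\<in>Cl h. Vector_Spaces.linear sc sc (\<gamma> X)) \<and>
     (\<forall>X\<in>Cl h. \<forall>Y\<in>Cl h. \<gamma> (cl_add h X Y) = (\<lambda>s. \<gamma> X s + \<gamma> Y s)) \<and>
     (\<forall>X\<in>Cl h. \<forall>Y\<in>Cl h. \<gamma> (cl_mult h X Y) = \<gamma> X \<circ> \<gamma> Y) \<and>
     (\<forall>r. \<forall>X\<in>Cl h. \<gamma> (cl_scale h r X) = (\<lambda>s. sc (complex_of_real r) (\<gamma> X s))) \<and>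
     \<gamma> (cl_one h) = id"

definition rep_V :: "('v::real_vector \<Rightarrow> 'v \<Rightarrow> real) \<Rightarrow> (('v list \<Rightarrow> real) set \<Rightarrow> 'e) \<Rightarrow> 'v \<Rightarrow> 'e" where
  "rep_V h \<gamma> = \<gamma> \<circ> cl_iota h"

definition weakly_faithful :: "('v::real_vector \<Rightarrow> 'v \<Rightarrow> real) \<Rightarrow> (('v list \<Rightarrow> real) set \<Rightarrow> 'e) \<Rightarrow> bool" where
  "weakly_faithful h \<gamma> \<longleftrightarrow> inj (rep_V h \<gamma>)"

definition clifford_rep_morphism ::
  "('v::real_vector \<Rightarrow> 'v \<Rightarrow> real) \<Rightarrow> ('w::real_vector \<Rightarrow> 'w \<Rightarrow> real)
   \<Rightarrow> (complex \<Rightarrow> 's::ab_group_add \<Rightarrow> 's) \<Rightarrow> (complex \<Rightarrow> 't::ab_group_add \<Rightarrow> 't)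
   \<Rightarrow> (('v list \<Rightarrow> real) set \<Rightarrow> ('s \<Rightarrow> 's)) \<Rightarrow> (('w list \<Rightarrow> real) set \<Rightarrow> ('t \<Rightarrow> 't))
   \<Rightarrow> ('v \<Rightarrow> 'w) \<Rightarrow> ('s \<Rightarrow> 't) \<Rightarrow> bool" where
  "clifford_rep_morphism h h' sc sc' \<gamma> \<gamma>' \<phi>0 \<phi> \<longleftrightarrow>
     isometry h h' \<phi>0 \<and> Vector_Spaces.linear sc sc' \<phi> \<and>
     (\<forall>X\<in>Cl h. \<gamma>' (cl_map h h' \<phi>0 X) \<circ> \<phi> = \<phi> \<circ> \<gamma> X)"

definition clifford_rep_iso ::
  "('v::real_vector \<Rightarrow> 'v \<Rightarrow> real) \<Rightarrow> ('w::real_vector \<Rightarrow> 'w \<Rightarrow> real)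
   \<Rightarrow> (complex \<Rightarrow> 's::ab_group_add \<Rightarrow> 's) \<Rightarrow> (complex \<Rightarrow> 't::ab_group_add \<Rightarrow> 't)
   \<Rightarrow> (('v list \<Rightarrow> real) set \<Rightarrow> ('s \<Rightarrow> 's)) \<Rightarrow> (('w list \<Rightarrow> real) set \<Rightarrow> ('t \<Rightarrow> 't))
   \<Rightarrow> ('v \<Rightarrow> 'w) \<Rightarrow> ('s \<Rightarrow> 't) \<Rightarrow> bool" where
  "clifford_rep_iso h h' sc sc' \<gamma> \<gamma>' \<phi>0 \<phi> \<longleftrightarrow>
     clifford_rep_morphism h h' sc sc' \<gamma> \<gamma>' \<phi>0 \<phi> \<and> bij \<phi>0 \<and> bij \<phi>"

definition Ad :: "('s \<Rightarrow> 't) \<Rightarrow> ('s \<Rightarrow> 's) \<Rightarrow> ('t \<Rightarrow> 't)" where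
  "Ad \<phi> A = \<phi> \<circ> A \<circ> inv \<phi>"

end

theory Submission
  imports Defs
begin

text \<open>
  An isomorphism (\<phi>0, \<phi>) intertwines \<gamma> and \<gamma>' on generators: \<gamma>'(\<phi>0 v) = Ad \<phi> (\<gamma> v).
  Since \<gamma>'|V' is injective this pins down \<phi>0, and surjectivity of \<phi>0 gives
  Ad \<phi> (\<gamma> V) = \<gamma>' V'. Conversely, if Ad \<phi> maps \<gamma> V onto \<gamma>' V', then
  \<phi>0 = (\<gamma>'|V')\<inverse> \<circ> Ad \<phi> \<circ> \<gamma>|V is well defined and bijective, and linear because Ad \<phi>, \<gamma>
  and \<gamma>' are. As Ad \<phi> is multiplicative and fixes scalars, it carries the Clifford
  relation \<gamma>(v) \<circ> \<gamma>(v) = h(v,v) to \<gamma>'(\<phi>0 v) \<circ> \<gamma>'(\<phi>0 v) = h(v,v), so \<phi>0 preserves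
  the quadratic form and, by polarization, is an isometry. Finally \<gamma>' \<circ> Cl(\<phi>0) and Ad \<phi> \<circ> \<gamma> are unital algebra
  morphisms that agree on the generators V, hence they agree everywhere.
\<close>

section \<open>The Clifford algebra as a quotient of the free algebra\<close>

lemma free_algI: "finite A \<Longrightarrow> {w. f w \<noteq> 0} \<subseteq> A \<Longrightarrow> f \<in> free_alg"
  unfolding free_alg_def using finite_subset by blast

lemma finite_support_free_alg: "f \<in> free_alg \<Longrightarrow> finite {w. f w \<noteq> 0}"
  by (simp add: free_alg_def)

lemma fa_word_free_alg: "fa_word u \<in> free_alg"
  unfolding fa_word_def by (rule free_algI[of "{u}"]) auto

lemma fa_zero_free_alg: "(\<lambda>w. 0) \<in> free_alg"
  unfolding free_alg_def by simp

lemma fa_add_free_alg: "f \<in> free_alg \<Longrightarrow> g \<in> free_alg \<Longrightarrow> fa_add f g \<in> free_alg"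
  unfolding fa_add_def
  by (rule free_algI[of "{w. f w \<noteq> 0} \<union> {w. g w \<noteq> 0}"]) (auto simp: free_alg_def)

lemma fa_scale_free_alg: "f \<in> free_alg \<Longrightarrow> fa_scale r f \<in> free_alg"
  unfolding fa_scale_def
  by (rule free_algI[of "{w. f w \<noteq> 0}"]) (auto simp: free_alg_def)

lemma fa_mult_support:
  "{w. fa_mult f g w \<noteq> 0} \<subseteq> (\<lambda>(a, b). a @ b) ` ({w. f w \<noteq> 0} \<times> {w. g w \<noteq> 0})"
proof
  fix w assume "w \<in> {w. fa_mult f g w \<noteq> 0}"
  then obtain i where "f (take i w) * g (drop i w) \<noteq> 0"
    unfolding fa_mult_def by (meson mem_Collect_eq sum.neutral)
  then show "w \<in> (\<lambda>(a, b). a @ b) ` ({w. f w \<noteq> 0} \<times> {w. g w \<noteq> 0})"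
    by (auto intro!: image_eqI[of _ _ "(take i w, drop i w)"])
qed

lemma fa_mult_free_alg: "f \<in> free_alg \<Longrightarrow> g \<in> free_alg \<Longrightarrow> fa_mult f g \<in> free_alg"
  by (rule free_algI[OF _ fa_mult_support]) (auto simp: free_alg_def)

lemmas free_alg_closed =
  fa_word_free_alg fa_zero_free_alg fa_add_free_alg fa_scale_free_alg fa_mult_free_alg

lemma fa_mult_add_left: "fa_mult (fa_add f f') g = fa_add (fa_mult f g) (fa_mult f' g)"
  unfolding fa_mult_def fa_add_def by (auto simp: sum.distrib distrib_right)

lemma fa_mult_add_right: "fa_mult g (fa_add f f') = fa_add (fa_mult g f) (fa_mult g f')"
  unfolding fa_mult_def fa_add_def by (auto simp: sum.distrib distrib_left)

lemma fa_mult_scale_left: "fa_mult (fa_scale r f) g = fa_scale r (fa_mult f g)"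
  unfolding fa_mult_def fa_scale_def by (auto simp: sum_distrib_left mult.assoc)

lemma fa_mult_scale_right: "fa_mult g (fa_scale r f) = fa_scale r (fa_mult g f)"
  unfolding fa_mult_def fa_scale_def by (auto simp: sum_distrib_left mult_ac)

lemma fa_mult_zero_left: "fa_mult (\<lambda>w. 0) g = (\<lambda>w. 0)"
  unfolding fa_mult_def by simp

lemma fa_mult_zero_right: "fa_mult g (\<lambda>w. 0) = (\<lambda>w. 0)"
  unfolding fa_mult_def by simp

lemma fa_mult_diff:
  "(\<lambda>w. fa_mult a b w - fa_mult c e w) =
   fa_add (fa_mult (\<lambda>w. a w - c w) b) (fa_mult c (\<lambda>w. b w - e w))"
  unfolding fa_mult_def fa_add_def
  by (auto simp: sum_subtractf[symmetric] sum.distrib[symmetric] algebra_simps)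

lemma fa_word_mult: "fa_mult (fa_word a) (fa_word b) = fa_word (a @ b)"
proof
  fix x
  have split: "take i x = a \<and> drop i x = b \<longleftrightarrow> i = length a \<and> x = a @ b" if "i \<le> length x" for i
    using that by (metis append_eq_conv_conj length_take min.absorb2)
  have "fa_mult (fa_word a) (fa_word b) x =
        (\<Sum>i\<le>length x. if i = length a \<and> x = a @ b then 1 else 0)"
    unfolding fa_mult_def fa_word_def by (rule sum.cong) (auto simp: split)
  also have "\<dots> = fa_word (a @ b) x"
    unfolding fa_word_def by (auto simp: sum.delta)
  finally show "fa_mult (fa_word a) (fa_word b) x = fa_word (a @ b) x" .
qed

lemma free_alg_induct[consumes 1, case_names zero add_monomial]:
  assumes f: "f \<in> free_alg"
    and zero: "P (\<lambda>w. 0)"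
    and add_monomial: "\<And>f a c. f \<in> free_alg \<Longrightarrow> P f \<Longrightarrow> f a = 0 \<Longrightarrow>
                          P (fa_add f (fa_scale c (fa_word a)))"
  shows "P f"
proof -
  have "\<forall>f\<in>free_alg. {w. f w \<noteq> 0} \<subseteq> A \<longrightarrow> P f" if "finite A" for A
    using that
  proof (induction A rule: finite_induct)
    case empty
    have "f = (\<lambda>w. 0)" if "{w. f w \<noteq> 0} \<subseteq> {}" for f :: "'a list \<Rightarrow> real"
      using that by auto
    then show ?case using zero by blast
  next
    case (insert a A)
    show ?case
    proof (intro ballI impI)
      fix f :: "'a list \<Rightarrow> real"
      assume f: "f \<in> free_alg" and supp: "{w. f w \<noteq> 0} \<subseteq> insert a A"
      define g where "g = f(a := 0)"
      have g: "g \<in> free_alg"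
        unfolding g_def by (rule free_algI[OF finite_support_free_alg[OF f]]) auto
      have "{w. g w \<noteq> 0} \<subseteq> A" using supp unfolding g_def by auto
      then have "P (fa_add g (fa_scale (f a) (fa_word a)))"
        using insert.IH g by (intro add_monomial) (auto simp: g_def)
      moreover have "fa_add g (fa_scale (f a) (fa_word a)) = f"
        unfolding g_def fa_add_def fa_scale_def fa_word_def by auto
      ultimately show "P f" by simp
    qed
  qed
  then show ?thesis using f unfolding free_alg_def by blast
qed

lemma cl_ideal_free_alg: "f \<in> cl_ideal h \<Longrightarrow> f \<in> free_alg"
  by (induction rule: cl_ideal.induct) (auto intro!: free_alg_closed)

lemma cl_ideal_pointwise_add: "f \<in> cl_ideal h \<Longrightarrow> g \<in> cl_ideal h \<Longrightarrow> (\<lambda>w. f w + g w) \<in> cl_ideal h"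
  using cl_ideal.add[of f h g] by (simp add: fa_add_def)

lemma cl_ideal_pointwise_scale: "f \<in> cl_ideal h \<Longrightarrow> (\<lambda>w. r * f w) \<in> cl_ideal h"
  using cl_ideal.scale[of f h r] by (simp add: fa_scale_def)

lemma cl_ideal_pointwise_diff: "f \<in> cl_ideal h \<Longrightarrow> g \<in> cl_ideal h \<Longrightarrow> (\<lambda>w. f w - g w) \<in> cl_ideal h"
  using cl_ideal_pointwise_add[of f h "\<lambda>w. (-1) * g w"] cl_ideal_pointwise_scale[of g h "-1"] by simp

lemma in_cl_class_iff: "g \<in> cl_class h f \<longleftrightarrow> g \<in> free_alg \<and> (\<lambda>w. f w - g w) \<in> cl_ideal h"
  unfolding cl_class_def fa_add_def fa_scale_def by simp

lemma cl_class_self: "f \<in> free_alg \<Longrightarrow> f \<in> cl_class h f"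
  unfolding in_cl_class_iff using cl_ideal.zero by simp

lemma cl_class_eq_iff:
  assumes "f \<in> free_alg" "g \<in> free_alg"
  shows "cl_class h f = cl_class h g \<longleftrightarrow> (\<lambda>w. f w - g w) \<in> cl_ideal h"
proof
  assume "cl_class h f = cl_class h g"
  then show "(\<lambda>w. f w - g w) \<in> cl_ideal h"
    using cl_class_self[OF assms(2)] in_cl_class_iff by blast
next
  assume fg: "(\<lambda>w. f w - g w) \<in> cl_ideal h"
  have "(\<lambda>w. f w - k w) \<in> cl_ideal h \<longleftrightarrow> (\<lambda>w. g w - k w) \<in> cl_ideal h" for k
      using cl_ideal_pointwise_diff[OF _ fg, of "\<lambda>w. f w - k w"]
      cl_ideal_pointwise_add[OF _ fg, of "\<lambda>w. g w - k w"]
    by auto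
  then show "cl_class h f = cl_class h g"
    unfolding in_cl_class_iff set_eq_iff by blast
qed

lemma cl_class_eqI:
  assumes "f \<in> free_alg" "g \<in> free_alg" "(\<lambda>w. g w - f w) \<in> cl_ideal h"
  shows "cl_class h f = cl_class h g"
  using cl_ideal_pointwise_scale[OF assms(3), of "-1"] cl_class_eq_iff[OF assms(1,2)] by simp

lemma cl_rep_class:
  assumes "f \<in> free_alg"
  shows "cl_rep (cl_class h f) \<in> free_alg" "(\<lambda>w. f w - cl_rep (cl_class h f) w) \<in> cl_ideal h"
proof -
  have "cl_rep (cl_class h f) \<in> cl_class h f"
    unfolding cl_rep_def by (rule someI[of "\<lambda>g. g \<in> cl_class h f", OF cl_class_self[OF assms]])
  then show "cl_rep (cl_class h f) \<in> free_alg" "(\<lambda>w. f w - cl_rep (cl_class h f) w) \<in> cl_ideal h"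
    unfolding in_cl_class_iff by blast+
qed

lemma cl_class_in_Cl: "f \<in> free_alg \<Longrightarrow> cl_class h f \<in> Cl h"
  unfolding Cl_def by auto

lemma ClE:
  assumes "X \<in> Cl h"
  obtains f where "f \<in> free_alg" "X = cl_class h f"
  using assms unfolding Cl_def by auto

lemma cl_add_class:
  assumes f: "f \<in> free_alg" and g: "g \<in> free_alg"
  shows "cl_add h (cl_class h f) (cl_class h g) = cl_class h (fa_add f g)"
proof -
  let ?a = "cl_rep (cl_class h f)" and ?b = "cl_rep (cl_class h g)"
  have "(\<lambda>w. fa_add f g w - fa_add ?a ?b w) =
        (\<lambda>w. (f w - ?a w) + (g w - ?b w))"
    by (auto simp: fa_add_def)
  also have "\<dots> \<in> cl_ideal h"
    by (intro cl_ideal_pointwise_add cl_rep_class f g)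
  finally show ?thesis
    unfolding cl_add_def
    by (intro cl_class_eqI free_alg_closed cl_rep_class f g)
qed

lemma cl_scale_class:
  assumes f: "f \<in> free_alg"
  shows "cl_scale h r (cl_class h f) = cl_class h (fa_scale r f)"
proof -
  let ?a = "cl_rep (cl_class h f)"
  have "(\<lambda>w. fa_scale r f w - fa_scale r ?a w) = (\<lambda>w. r * (f w - ?a w))"
    by (auto simp: fa_scale_def algebra_simps)
  also have "\<dots> \<in> cl_ideal h"
    by (intro cl_ideal_pointwise_scale cl_rep_class f)
  finally show ?thesis
    unfolding cl_scale_def
    by (intro cl_class_eqI free_alg_closed cl_rep_class f)
qed

lemma cl_mult_class:
  assumes f: "f \<in> free_alg" and g: "g \<in> free_alg"
  shows "cl_mult h (cl_class h f) (cl_class h g) = cl_class h (fa_mult f g)"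
proof -
  let ?a = "cl_rep (cl_class h f)" and ?b = "cl_rep (cl_class h g)"
  have "(\<lambda>w. fa_mult f g w - fa_mult ?a ?b w) =
        fa_add (fa_mult (\<lambda>w. f w - ?a w) g) (fa_mult ?a (\<lambda>w. g w - ?b w))"
    by (rule fa_mult_diff)
  also have "\<dots> \<in> cl_ideal h"
    by (intro cl_ideal.add cl_ideal.rmult cl_ideal.lmult cl_rep_class f g)
  finally show ?thesis
    unfolding cl_mult_def
    by (intro cl_class_eqI free_alg_closed cl_rep_class f g)
qed

lemma cl_one_in_Cl: "cl_one h \<in> Cl h"
  unfolding cl_one_def by (rule cl_class_in_Cl[OF fa_word_free_alg])

lemma cl_iota_in_Cl: "cl_iota h v \<in> Cl h"
  unfolding cl_iota_def by (rule cl_class_in_Cl[OF fa_word_free_alg])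

lemma cl_scale_in_Cl: "X \<in> Cl h \<Longrightarrow> cl_scale h r X \<in> Cl h"
  by (elim ClE) (simp add: cl_scale_class cl_class_in_Cl free_alg_closed)

lemma Cl_induct[consumes 1, case_names one iota add mult scale]:
  assumes X: "X \<in> Cl h"
    and one: "P (cl_one h)"
    and iota: "\<And>v. P (cl_iota h v)"
    and add: "\<And>X Y. X \<in> Cl h \<Longrightarrow> Y \<in> Cl h \<Longrightarrow> P X \<Longrightarrow> P Y \<Longrightarrow> P (cl_add h X Y)"
    and mult: "\<And>X Y. X \<in> Cl h \<Longrightarrow> Y \<in> Cl h \<Longrightarrow> P X \<Longrightarrow> P Y \<Longrightarrow> P (cl_mult h X Y)"
    and scale: "\<And>r X. X \<in> Cl h \<Longrightarrow> P X \<Longrightarrow> P (cl_scale h r X)"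
  shows "P X"
proof -
  have word: "P (cl_class h (fa_word w))" for w
  proof (induction w)
    case Nil
    then show ?case using one by (simp add: cl_one_def)
  next
    case (Cons v w)
    have "cl_class h (fa_word (v # w)) = cl_mult h (cl_iota h v) (cl_class h (fa_word w))"
      unfolding cl_iota_def using fa_word_mult[of "[v]" w] by (simp add: cl_mult_class free_alg_closed)
    then show ?case
      using mult[OF cl_iota_in_Cl cl_class_in_Cl[OF fa_word_free_alg] iota Cons] by simp
  qed
  have "P (cl_class h f)" if "f \<in> free_alg" for f
    using that
  proof (induction rule: free_alg_induct)
    case zero
    have "cl_class h (\<lambda>w. 0) = cl_scale h 0 (cl_one h)"
      unfolding cl_one_def by (simp add: cl_scale_class free_alg_closed fa_scale_def)
    then show ?case using scale[OF cl_one_in_Cl one] by simp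
  next
    case (add_monomial f a c)
    have "cl_class h (fa_add f (fa_scale c (fa_word a))) =
          cl_add h (cl_class h f) (cl_scale h c (cl_class h (fa_word a)))"
      by (simp add: cl_add_class cl_scale_class free_alg_closed add_monomial.hyps(1))
    then show ?case
      using add[OF cl_class_in_Cl[OF add_monomial.hyps(1)] cl_scale_in_Cl[OF cl_class_in_Cl]
          add_monomial.IH scale[OF cl_class_in_Cl word]]
      by (simp add: free_alg_closed)
  qed
  then show ?thesis using X by (elim ClE) simp
qed

section \<open>Functoriality of the Clifford algebra\<close>

definition fa_map :: "('v \<Rightarrow> 'w) \<Rightarrow> ('v list \<Rightarrow> real) \<Rightarrow> ('w list \<Rightarrow> real)" where
  "fa_map \<phi> f u = (\<Sum>x\<in>{x. f x \<noteq> 0}. if map \<phi> x = u then f x else 0)"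

lemma fa_map_eq_sum:
  assumes "finite A" "{x. f x \<noteq> 0} \<subseteq> A"
  shows "fa_map \<phi> f u = (\<Sum>x\<in>A. if map \<phi> x = u then f x else 0)"
  unfolding fa_map_def by (rule sum.mono_neutral_left[OF assms]) auto

lemma fa_map_free_alg: "f \<in> free_alg \<Longrightarrow> fa_map \<phi> f \<in> free_alg"
proof (rule free_algI)
  assume f: "f \<in> free_alg"
  show "finite (map \<phi> ` {x. f x \<noteq> 0})" using finite_support_free_alg[OF f] by simp
  show "{u. fa_map \<phi> f u \<noteq> 0} \<subseteq> map \<phi> ` {x. f x \<noteq> 0}"
  proof
    fix u assume "u \<in> {u. fa_map \<phi> f u \<noteq> 0}"
    then obtain x where "f x \<noteq> 0" "(if map \<phi> x = u then f x else 0) \<noteq> 0"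
      unfolding fa_map_def using sum.neutral by force
    then show "u \<in> map \<phi> ` {x. f x \<noteq> 0}" by (auto split: if_splits)
  qed
qed

lemma fa_map_zero: "fa_map \<phi> (\<lambda>w. 0) = (\<lambda>w. 0)"
  by (rule ext) (simp add: fa_map_def)

lemma fa_map_word: "fa_map \<phi> (fa_word a) = fa_word (map \<phi> a)"
proof
  fix u
  have "fa_map \<phi> (fa_word a) u = (\<Sum>x\<in>{a}. if map \<phi> x = u then fa_word a x else 0)"
    by (rule fa_map_eq_sum) (auto simp: fa_word_def)
  then show "fa_map \<phi> (fa_word a) u = fa_word (map \<phi> a) u"
    by (simp add: fa_word_def)
qed

lemma fa_map_add:
  assumes f: "f \<in> free_alg" and g: "g \<in> free_alg"
  shows "fa_map \<phi> (fa_add f g) = fa_add (fa_map \<phi> f) (fa_map \<phi> g)"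
proof
  fix u
  let ?A = "{x. f x \<noteq> 0} \<union> {x. g x \<noteq> 0}"
  have A: "finite ?A" using finite_support_free_alg[OF f] finite_support_free_alg[OF g] by simp
  have "fa_map \<phi> (fa_add f g) u = (\<Sum>x\<in>?A. if map \<phi> x = u then fa_add f g x else 0)"
    by (rule fa_map_eq_sum[OF A]) (auto simp: fa_add_def)
  also have "\<dots> = (\<Sum>x\<in>?A. (if map \<phi> x = u then f x else 0) + (if map \<phi> x = u then g x else 0))"
    by (rule sum.cong) (auto simp: fa_add_def)
  also have "\<dots> = fa_add (fa_map \<phi> f) (fa_map \<phi> g) u"
    by (simp add: sum.distrib fa_map_eq_sum[OF A] fa_add_def)
  finally show "fa_map \<phi> (fa_add f g) u = fa_add (fa_map \<phi> f) (fa_map \<phi> g) u" .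
qed

lemma fa_map_scale: "fa_map \<phi> (fa_scale r f) = fa_scale r (fa_map \<phi> f)"
proof (cases "r = 0")
  case True
  then show ?thesis by (simp add: fa_scale_def fa_map_zero)
next
  case False
  then have "{x. fa_scale r f x \<noteq> 0} = {x. f x \<noteq> 0}" by (auto simp: fa_scale_def)
  then show ?thesis
    unfolding fa_map_def fa_scale_def by (auto simp: sum_distrib_left intro!: sum.cong)
qed

lemma fa_map_diff:
  assumes "f \<in> free_alg" "g \<in> free_alg"
  shows "fa_map \<phi> (\<lambda>w. f w - g w) = (\<lambda>u. fa_map \<phi> f u - fa_map \<phi> g u)"
proof -
  have "(\<lambda>w. f w - g w) = fa_add f (fa_scale (-1) g)" by (auto simp: fa_add_def fa_scale_def)
  then show ?thesis using assms
    by (simp add: fa_map_add fa_map_scale free_alg_closed) (auto simp: fa_add_def fa_scale_def)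
qed

lemma fa_map_mult_word:
  assumes "g \<in> free_alg"
  shows "fa_map \<phi> (fa_mult (fa_word a) g) = fa_mult (fa_word (map \<phi> a)) (fa_map \<phi> g)"
  using assms
proof (induction rule: free_alg_induct)
  case zero
  show ?case by (simp add: fa_mult_zero_right fa_map_zero)
next
  case (add_monomial g b c)
  then show ?case
    by (simp add: fa_mult_add_right fa_mult_scale_right fa_word_mult fa_map_add fa_map_scale
        fa_map_word fa_map_free_alg free_alg_closed)
qed

lemma fa_map_mult:
  assumes "f \<in> free_alg" "g \<in> free_alg"
  shows "fa_map \<phi> (fa_mult f g) = fa_mult (fa_map \<phi> f) (fa_map \<phi> g)"
  using assms
proof (induction rule: free_alg_induct)
  case zero
  show ?case by (simp add: fa_mult_zero_left fa_map_zero)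
next
  case (add_monomial f a c)
  then show ?case
    by (simp add: fa_mult_add_left fa_mult_scale_left fa_map_mult_word fa_map_add fa_map_scale
        fa_map_word fa_map_free_alg free_alg_closed)
qed

lemma fa_map_cl_ideal:
  assumes iso: "isometry h h' \<phi>" and f: "f \<in> cl_ideal h"
  shows "fa_map \<phi> f \<in> cl_ideal h'"
  using f
proof (induction rule: cl_ideal.induct)
  case (gen_add x y)
  have "\<phi> (x + y) = \<phi> x + \<phi> y" using iso by (simp add: isometry_def linear_add)
  then show ?case
    by (simp add: fa_map_add fa_map_scale fa_map_word free_alg_closed cl_ideal.gen_add)
next
  case (gen_scale a x)
  have "\<phi> (a *\<^sub>R x) = a *\<^sub>R \<phi> x" using iso by (simp add: isometry_def linear_scale)
  then show ?case
    by (simp add: fa_map_add fa_map_scale fa_map_word free_alg_closed cl_ideal.gen_scale)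
next
  case (gen_cliff x)
  have "h' (\<phi> x) (\<phi> x) = h x x" using iso by (simp add: isometry_def)
  then show ?case using cl_ideal.gen_cliff[of "\<phi> x" h']
    by (simp add: fa_map_add fa_map_scale fa_map_word free_alg_closed)
qed (simp_all add: fa_map_zero fa_map_add fa_map_scale fa_map_mult fa_map_free_alg
       cl_ideal_free_alg cl_ideal.intros)

text \<open>Cl(\<phi>) computed on representatives; it is well defined because fa_map \<phi> preserves
  the Clifford ideal.\<close>

definition cl_lift ::
  "('v::real_vector \<Rightarrow> 'v \<Rightarrow> real) \<Rightarrow> ('w::real_vector \<Rightarrow> 'w \<Rightarrow> real) \<Rightarrow> ('v \<Rightarrow> 'w)
   \<Rightarrow> ('v list \<Rightarrow> real) set \<Rightarrow> ('w list \<Rightarrow> real) set" where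
  "cl_lift h h' \<phi> X = (if X \<in> Cl h then cl_class h' (fa_map \<phi> (cl_rep X)) else undefined)"

lemma cl_lift_class:
  assumes iso: "isometry h h' \<phi>" and f: "f \<in> free_alg"
  shows "cl_lift h h' \<phi> (cl_class h f) = cl_class h' (fa_map \<phi> f)"
proof -
  let ?a = "cl_rep (cl_class h f)"
  have "(\<lambda>u. fa_map \<phi> f u - fa_map \<phi> ?a u) \<in> cl_ideal h'"
    using fa_map_cl_ideal[OF iso cl_rep_class(2)[OF f]] by (simp add: fa_map_diff cl_rep_class f)
  then have "cl_class h' (fa_map \<phi> ?a) = cl_class h' (fa_map \<phi> f)"
    by (intro cl_class_eqI fa_map_free_alg cl_rep_class f)
  then show ?thesis unfolding cl_lift_def using cl_class_in_Cl[OF f] by simp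
qed

lemma cl_lift_alg_hom:
  assumes iso: "isometry h h' \<phi>"
  shows "cl_alg_hom h h' (cl_lift h h' \<phi>)"
  unfolding cl_alg_hom_def
proof (intro conjI ballI allI impI)
  fix X Y assume "X \<in> Cl h" "Y \<in> Cl h"
  then obtain f g where "f \<in> free_alg" "X = cl_class h f" "g \<in> free_alg" "Y = cl_class h g"
    by (meson ClE)
  then show "cl_lift h h' \<phi> (cl_add h X Y) = cl_add h' (cl_lift h h' \<phi> X) (cl_lift h h' \<phi> Y)"
    and "cl_lift h h' \<phi> (cl_mult h X Y) = cl_mult h' (cl_lift h h' \<phi> X) (cl_lift h h' \<phi> Y)"
    by (simp_all add: cl_lift_class[OF iso] cl_add_class cl_mult_class fa_map_add fa_map_mult
        fa_map_free_alg free_alg_closed)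
next
  fix X r assume "X \<in> Cl h"
  then obtain f where "f \<in> free_alg" "X = cl_class h f" by (rule ClE)
  then show "cl_lift h h' \<phi> X \<in> Cl h'"
    and "cl_lift h h' \<phi> (cl_scale h r X) = cl_scale h' r (cl_lift h h' \<phi> X)"
    by (simp_all add: cl_lift_class[OF iso] cl_scale_class fa_map_scale cl_class_in_Cl
        fa_map_free_alg free_alg_closed)
next
  show "cl_lift h h' \<phi> (cl_one h) = cl_one h'"
    unfolding cl_one_def by (simp add: cl_lift_class[OF iso] fa_word_free_alg fa_map_word)
qed (simp add: cl_lift_def)

lemma cl_lift_iota: "isometry h h' \<phi> \<Longrightarrow> cl_lift h h' \<phi> (cl_iota h v) = cl_iota h' (\<phi> v)"
  unfolding cl_iota_def by (simp add: cl_lift_class fa_word_free_alg fa_map_word)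

lemma cl_alg_hom_eqI:
  assumes hom1: "cl_alg_hom h h' \<Phi>" and hom2: "cl_alg_hom h h' \<Psi>"
    and iota: "\<And>v. \<Phi> (cl_iota h v) = \<Psi> (cl_iota h v)"
  shows "\<Phi> = \<Psi>"
proof
  fix X
  show "\<Phi> X = \<Psi> X"
  proof (cases "X \<in> Cl h")
    case True
    then show ?thesis
      by (induction rule: Cl_induct) (use hom1 hom2 iota in \<open>simp_all add: cl_alg_hom_def\<close>)
  qed (use hom1 hom2 in \<open>simp add: cl_alg_hom_def\<close>)
qed

lemma cl_map_alg_hom:
  assumes "isometry h h' \<phi>0"
  shows "cl_alg_hom h h' (cl_map h h' \<phi>0)" "cl_map h h' \<phi>0 (cl_iota h v) = cl_iota h' (\<phi>0 v)"
proof -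
  have "\<exists>!\<Phi>. cl_alg_hom h h' \<Phi> \<and> (\<forall>v. \<Phi> (cl_iota h v) = cl_iota h' (\<phi>0 v))"
  proof (rule ex1I)
    show "cl_alg_hom h h' (cl_lift h h' \<phi>0) \<and> (\<forall>v. cl_lift h h' \<phi>0 (cl_iota h v) = cl_iota h' (\<phi>0 v))"
      using cl_lift_alg_hom[OF assms] cl_lift_iota[OF assms] by blast
  next
    fix \<Phi> assume "cl_alg_hom h h' \<Phi> \<and> (\<forall>v. \<Phi> (cl_iota h v) = cl_iota h' (\<phi>0 v))"
    then show "\<Phi> = cl_lift h h' \<phi>0"
      using cl_lift_alg_hom[OF assms] cl_lift_iota[OF assms] by (auto intro: cl_alg_hom_eqI)
  qed
  from theI'[OF this] show "cl_alg_hom h h' (cl_map h h' \<phi>0)"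
    "cl_map h h' \<phi>0 (cl_iota h v) = cl_iota h' (\<phi>0 v)"
    unfolding cl_map_def by blast+
qed

section \<open>Clifford relations in a representation\<close>

lemma cl_iota_add: "cl_iota h (x + y) = cl_add h (cl_iota h x) (cl_iota h y)"
proof -
  have "(\<lambda>w. fa_word [x + y] w - fa_add (fa_word [x]) (fa_word [y]) w) =
        fa_add (fa_word [x + y]) (fa_scale (-1) (fa_add (fa_word [x]) (fa_word [y])))"
    by (simp add: fa_add_def fa_scale_def fun_eq_iff)
  with cl_ideal.gen_add[of x y h] show ?thesis
    unfolding cl_iota_def by (simp add: cl_add_class cl_class_eq_iff free_alg_closed)
qed

lemma cl_iota_scale: "cl_iota h (a *\<^sub>R x) = cl_scale h a (cl_iota h x)"
proof -
  have "(\<lambda>w. fa_word [a *\<^sub>R x] w - fa_scale a (fa_word [x]) w) =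
        fa_add (fa_word [a *\<^sub>R x]) (fa_scale (- a) (fa_word [x]))"
    by (simp add: fa_add_def fa_scale_def fun_eq_iff)
  with cl_ideal.gen_scale[of a x h] show ?thesis
    unfolding cl_iota_def by (simp add: cl_scale_class cl_class_eq_iff free_alg_closed)
qed

lemma cl_iota_square: "cl_mult h (cl_iota h x) (cl_iota h x) = cl_scale h (h x x) (cl_one h)"
proof -
  have "(\<lambda>w. fa_word [x, x] w - fa_scale (h x x) (fa_word []) w) =
        fa_add (fa_word [x, x]) (fa_scale (- h x x) (fa_word []))"
    by (simp add: fa_add_def fa_scale_def fun_eq_iff)
  with cl_ideal.gen_cliff[of x h] show ?thesis
    unfolding cl_iota_def cl_one_def
    by (simp add: cl_mult_class cl_scale_class fa_word_mult cl_class_eq_iff free_alg_closed)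
qed

lemma rep_V_add:
  "clifford_rep h sc \<gamma> \<Longrightarrow> rep_V h \<gamma> (x + y) = (\<lambda>s. rep_V h \<gamma> x s + rep_V h \<gamma> y s)"
  unfolding clifford_rep_def rep_V_def by (simp add: cl_iota_add cl_iota_in_Cl)

lemma rep_V_scale:
  "clifford_rep h sc \<gamma> \<Longrightarrow> rep_V h \<gamma> (a *\<^sub>R x) = (\<lambda>s. sc (complex_of_real a) (rep_V h \<gamma> x s))"
  unfolding clifford_rep_def rep_V_def by (simp add: cl_iota_scale cl_iota_in_Cl)

lemma rep_V_square:
  assumes "clifford_rep h sc \<gamma>"
  shows "rep_V h \<gamma> x \<circ> rep_V h \<gamma> x = (\<lambda>s. sc (complex_of_real (h x x)) s)"
proof -
  have "rep_V h \<gamma> x \<circ> rep_V h \<gamma> x = \<gamma> (cl_mult h (cl_iota h x) (cl_iota h x))"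
    using assms by (simp add: clifford_rep_def rep_V_def cl_iota_in_Cl)
  also have "\<dots> = (\<lambda>s. sc (complex_of_real (h x x)) s)"
    using assms by (simp add: clifford_rep_def cl_iota_square cl_one_in_Cl)
  finally show ?thesis .
qed

lemma weakly_faithful_trivial:
  fixes x :: "'v::real_vector" and \<gamma> :: "('v list \<Rightarrow> real) set \<Rightarrow> ('s::zero \<Rightarrow> 's)"
  assumes "weakly_faithful h \<gamma>" and "\<And>s::'s. s = 0"
  shows "x = 0"
proof -
  have "rep_V h \<gamma> x = rep_V h \<gamma> 0" using assms(2) by (metis ext)
  then show ?thesis using assms(1) by (simp add: weakly_faithful_def inj_eq)
qed

lemma vs_linear_add: "Vector_Spaces.linear s1 s2 f \<Longrightarrow> f (x + y) = f x + f y"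
  by (rule module_hom.add[OF module_hom_linearI])

lemma vs_linear_scale: "Vector_Spaces.linear s1 s2 f \<Longrightarrow> f (s1 c x) = s2 c (f x)"
  by (rule module_hom.scale[OF module_hom_linearI])

lemma Ad_add:
  "Vector_Spaces.linear sc sc' \<phi> \<Longrightarrow> Ad \<phi> (\<lambda>s. A s + B s) = (\<lambda>t. Ad \<phi> A t + Ad \<phi> B t)"
  unfolding Ad_def by (simp add: vs_linear_add o_def)

lemma Ad_scale:
  "Vector_Spaces.linear sc sc' \<phi> \<Longrightarrow> Ad \<phi> (\<lambda>s. sc c (A s)) = (\<lambda>t. sc' c (Ad \<phi> A t))"
  unfolding Ad_def by (simp add: vs_linear_scale o_def)

lemma Ad_scalar:
  assumes "Vector_Spaces.linear sc sc' \<phi>" "surj \<phi>"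
  shows "Ad \<phi> (\<lambda>s. sc c s) = (\<lambda>t. sc' c t)"
  unfolding Ad_def using assms by (simp add: vs_linear_scale o_def surj_f_inv_f)

lemma Ad_comp: "inj \<phi> \<Longrightarrow> Ad \<phi> (A \<circ> B) = Ad \<phi> A \<circ> Ad \<phi> B"
  unfolding Ad_def by (auto simp: o_def)

lemma Ad_comp_right: "inj \<phi> \<Longrightarrow> Ad \<phi> A \<circ> \<phi> = \<phi> \<circ> A"
  unfolding Ad_def by (auto simp: o_def)

lemma inj_Ad: "inj \<phi> \<Longrightarrow> inj (Ad \<phi>)"
proof (rule injI)
  fix A B assume "inj \<phi>" "Ad \<phi> A = Ad \<phi> B"
  then have "\<phi> \<circ> A = \<phi> \<circ> B" by (metis Ad_comp_right)
  with \<open>inj \<phi>\<close> show "A = B" by (auto simp: fun_eq_iff inj_eq)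
qed

lemma quadratic_space_right_zero: "quadratic_space h \<Longrightarrow> h x 0 = 0"
  unfolding quadratic_space_def using linear_0 by blast

lemma quadratic_space_polarization:
  assumes "quadratic_space h"
  shows "h x y = (h (x + y) (x + y) - h x x - h y y) / 2"
proof -
  have lin: "\<And>x. linear (h x)" and sym: "\<And>x y. h x y = h y x"
    using assms unfolding quadratic_space_def by auto
  have "h (x + y) (x + y) = h x x + h y x + (h x y + h y y)"
    by (simp add: linear_add[OF lin] sym[of "x + y"])
  then show ?thesis by (simp add: sym[of y x])
qed

section \<open>Intertwiners of weakly faithful representations\<close>

lemma clifford_rep_morphismI:
  assumes cr: "clifford_rep h sc \<gamma>" and cr': "clifford_rep h' sc' \<gamma>'"
    and iso: "isometry h h' \<phi>0" and lin: "Vector_Spaces.linear sc sc' \<phi>"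
    and generators: "\<And>v. \<gamma>' (cl_iota h' (\<phi>0 v)) \<circ> \<phi> = \<phi> \<circ> \<gamma> (cl_iota h v)"
  shows "clifford_rep_morphism h h' sc sc' \<gamma> \<gamma>' \<phi>0 \<phi>"
  unfolding clifford_rep_morphism_def
proof (intro conjI iso lin ballI)
  fix X assume "X \<in> Cl h"
  then show "\<gamma>' (cl_map h h' \<phi>0 X) \<circ> \<phi> = \<phi> \<circ> \<gamma> X"
  proof (induction rule: Cl_induct)
    case (iota v)
    then show ?case using generators by (simp add: cl_map_alg_hom(2)[OF iso])
  qed (use cl_map_alg_hom(1)[OF iso] cr cr' in
       \<open>simp_all add: cl_alg_hom_def clifford_rep_def fun_eq_iff
          vs_linear_add[OF lin] vs_linear_scale[OF lin]\<close>)
qed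

lemma clifford_rep_iso_rep_V:
  assumes "clifford_rep_iso h h' sc sc' \<gamma> \<gamma>' \<phi>0 \<phi>"
  shows "rep_V h' \<gamma>' (\<phi>0 v) = Ad \<phi> (rep_V h \<gamma> v)"
proof -
  have "isometry h h' \<phi>0" and "bij \<phi>"
    and "\<gamma>' (cl_map h h' \<phi>0 (cl_iota h v)) \<circ> \<phi> = \<phi> \<circ> \<gamma> (cl_iota h v)"
    using assms cl_iota_in_Cl
    unfolding clifford_rep_iso_def clifford_rep_morphism_def by blast+
  then have "rep_V h' \<gamma>' (\<phi>0 v) \<circ> \<phi> \<circ> inv \<phi> = Ad \<phi> (rep_V h \<gamma> v)"
    by (simp add: cl_map_alg_hom(2) rep_V_def Ad_def)
  then show ?thesis
    using bij_is_surj[OF \<open>bij \<phi>\<close>] by (simp add: comp_assoc surj_iff)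
qed

context
  fixes h :: "'v::real_vector \<Rightarrow> 'v \<Rightarrow> real"
    and h' :: "'w::real_vector \<Rightarrow> 'w \<Rightarrow> real"
    and sc :: "complex \<Rightarrow> 's::ab_group_add \<Rightarrow> 's"
    and sc' :: "complex \<Rightarrow> 't::ab_group_add \<Rightarrow> 't"
    and \<gamma> :: "('v list \<Rightarrow> real) set \<Rightarrow> ('s \<Rightarrow> 's)"
    and \<gamma>' :: "('w list \<Rightarrow> real) set \<Rightarrow> ('t \<Rightarrow> 't)"
    and \<phi> :: "'s \<Rightarrow> 't" and f :: "'v \<Rightarrow> 'w"
  assumes cr: "clifford_rep h sc \<gamma>" and cr': "clifford_rep h' sc' \<gamma>'"
    and wf: "weakly_faithful h \<gamma>" and wf': "weakly_faithful h' \<gamma>'"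
    and lin: "Vector_Spaces.linear sc sc' \<phi>" and bij: "bij \<phi>"
    and intertwines: "\<And>v. rep_V h' \<gamma>' (f v) = Ad \<phi> (rep_V h \<gamma> v)"
begin

lemma intertwiner_linear: "linear f"
proof
  fix x y and a :: real
  have "rep_V h' \<gamma>' (f (x + y)) = rep_V h' \<gamma>' (f x + f y)"
    by (simp add: intertwines rep_V_add[OF cr] rep_V_add[OF cr'] Ad_add[OF lin])
  moreover have "rep_V h' \<gamma>' (f (a *\<^sub>R x)) = rep_V h' \<gamma>' (a *\<^sub>R f x)"
    by (simp add: intertwines rep_V_scale[OF cr] rep_V_scale[OF cr'] Ad_scale[OF lin])
  ultimately show "f (x + y) = f x + f y" "f (a *\<^sub>R x) = a *\<^sub>R f x"
    using wf' by (simp_all add: weakly_faithful_def inj_eq)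
qed

lemma intertwiner_square:
  assumes qs: "quadratic_space h" and qs': "quadratic_space h'"
  shows "h' (f x) (f x) = h x x"
proof (cases "\<exists>t::'t. t \<noteq> 0")
  case True
  then obtain t :: 't where "t \<noteq> 0" by blast
  have "(\<lambda>t. sc' (complex_of_real (h' (f x) (f x))) t) = rep_V h' \<gamma>' (f x) \<circ> rep_V h' \<gamma>' (f x)"
    by (rule rep_V_square[OF cr', symmetric])
  also have "\<dots> = Ad \<phi> (rep_V h \<gamma> x \<circ> rep_V h \<gamma> x)"
    by (simp add: intertwines Ad_comp bij_is_inj[OF bij])
  also have "\<dots> = (\<lambda>t. sc' (complex_of_real (h x x)) t)"
    by (simp add: rep_V_square[OF cr] Ad_scalar[OF lin bij_is_surj[OF bij]])
  finally have "sc' (complex_of_real (h' (f x) (f x))) t = sc' (complex_of_real (h x x)) t"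
    by (rule fun_cong)
  then show ?thesis
    using \<open>t \<noteq> 0\<close> vector_space.scale_cancel_right[OF Vector_Spaces.linear.axioms(2)[OF lin]]
    by simp
next
  case False
  \<comment> \<open>S' = 0, hence S = 0, and weak faithfulness forces V = 0 and V' = 0.\<close>
  then have trivial': "t = 0" for t :: 't by blast
  have trivial: "s = 0" for s :: 's
    using injD[OF bij_is_inj[OF bij], of s 0] trivial'[of "\<phi> s"] trivial'[of "\<phi> 0"] by simp
  have "x = 0" by (rule weakly_faithful_trivial[OF wf trivial])
  moreover have "f x = 0" by (rule weakly_faithful_trivial[OF wf' trivial'])
  ultimately show ?thesis
    using quadratic_space_right_zero[OF qs] quadratic_space_right_zero[OF qs'] by simp
qed

lemma intertwiner_isometry:
  assumes qs: "quadratic_space h" and qs': "quadratic_space h'"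
  shows "isometry h h' f"
  unfolding isometry_def
proof (intro conjI allI intertwiner_linear)
  fix x y
  have "h' (f x) (f y) = (h' (f x + f y) (f x + f y) - h' (f x) (f x) - h' (f y) (f y)) / 2"
    by (rule quadratic_space_polarization[OF qs'])
  also have "\<dots> = (h (x + y) (x + y) - h x x - h y y) / 2"
    by (simp only: linear_add[OF intertwiner_linear, symmetric] intertwiner_square[OF qs qs'])
  also have "\<dots> = h x y"
    by (rule quadratic_space_polarization[OF qs, symmetric])
  finally show "h' (f x) (f y) = h x y" .
qed

lemma intertwiner_bij:
  assumes "Ad \<phi> ` range (rep_V h \<gamma>) = range (rep_V h' \<gamma>')"
  shows "bij f"
proof (rule bijI)
  have "inj (Ad \<phi> \<circ> rep_V h \<gamma>)"
    using wf inj_Ad[OF bij_is_inj[OF bij]] by (simp add: weakly_faithful_def inj_compose)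
  moreover have "Ad \<phi> \<circ> rep_V h \<gamma> = rep_V h' \<gamma>' \<circ> f"
    by (simp add: fun_eq_iff intertwines)
  ultimately show "inj f" by (metis inj_on_imageI2)
  have "rep_V h' \<gamma>' ` range f = range (rep_V h' \<gamma>')"
    using assms by (simp add: image_image intertwines)
  then show "surj f" using wf' by (simp add: weakly_faithful_def inj_image_eq_iff)
qed

lemma intertwiner_clifford_rep_iso:
  assumes "quadratic_space h" "quadratic_space h'"
    and "Ad \<phi> ` range (rep_V h \<gamma>) = range (rep_V h' \<gamma>')"
  shows "clifford_rep_iso h h' sc sc' \<gamma> \<gamma>' f \<phi>"
  unfolding clifford_rep_iso_def
proof (intro conjI bij intertwiner_bij assms clifford_rep_morphismI cr cr' lin intertwiner_isometry)
  fix v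
  show "\<gamma>' (cl_iota h' (f v)) \<circ> \<phi> = \<phi> \<circ> \<gamma> (cl_iota h v)"
    using intertwines[of v] Ad_comp_right[OF bij_is_inj[OF bij]] by (simp add: rep_V_def)
qed

end

theorem proposition3p6:
  fixes h :: "'v::real_vector \<Rightarrow> 'v \<Rightarrow> real"
    and h' :: "'w::real_vector \<Rightarrow> 'w \<Rightarrow> real"
    and sc :: "complex \<Rightarrow> 's::ab_group_add \<Rightarrow> 's"
    and sc' :: "complex \<Rightarrow> 't::ab_group_add \<Rightarrow> 't"
    and \<gamma> :: "('v list \<Rightarrow> real) set \<Rightarrow> ('s \<Rightarrow> 's)"
    and \<gamma>' :: "('w list \<Rightarrow> real) set \<Rightarrow> ('t \<Rightarrow> 't)"
  assumes "quadratic_space h" and "quadratic_space h'"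
    and "fd_complex_space sc" and "fd_complex_space sc'"
    and "clifford_rep h sc \<gamma>" and "clifford_rep h' sc' \<gamma>'"
    and "weakly_faithful h \<gamma>" and "weakly_faithful h' \<gamma>'"
  shows "(\<forall>\<phi>0 \<phi>. clifford_rep_iso h h' sc sc' \<gamma> \<gamma>' \<phi>0 \<phi> \<longrightarrow>
            Ad \<phi> ` range (rep_V h \<gamma>) = range (rep_V h' \<gamma>') \<and>
            \<phi>0 = inv (rep_V h' \<gamma>') \<circ> Ad \<phi> \<circ> rep_V h \<gamma>)
       \<and> (\<forall>\<phi>. Vector_Spaces.linear sc sc' \<phi> \<and> bij \<phi> \<and>
            Ad \<phi> ` range (rep_V h \<gamma>) = range (rep_V h' \<gamma>') \<longrightarrow>
            (let \<phi>0 = inv (rep_V h' \<gamma>') \<circ> Ad \<phi> \<circ> rep_V h \<gamma>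
             in isometry h h' \<phi>0 \<and> bij \<phi>0 \<and> clifford_rep_iso h h' sc sc' \<gamma> \<gamma>' \<phi>0 \<phi>))"
proof (intro conjI allI impI)
  fix \<phi>0 \<phi>
  assume iso: "clifford_rep_iso h h' sc sc' \<gamma> \<gamma>' \<phi>0 \<phi>"
  have rep: "rep_V h' \<gamma>' (\<phi>0 v) = Ad \<phi> (rep_V h \<gamma> v)" for v
    by (rule clifford_rep_iso_rep_V[OF iso])
  have "Ad \<phi> ` range (rep_V h \<gamma>) = rep_V h' \<gamma>' ` range \<phi>0"
    by (simp add: image_image rep)
  then show "Ad \<phi> ` range (rep_V h \<gamma>) = range (rep_V h' \<gamma>')"
    using iso by (simp add: clifford_rep_iso_def bij_is_surj)
  show "\<phi>0 = inv (rep_V h' \<gamma>') \<circ> Ad \<phi> \<circ> rep_V h \<gamma>"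
    using assms(8) by (simp add: fun_eq_iff rep[symmetric] weakly_faithful_def)
next
  fix \<phi>
  assume "Vector_Spaces.linear sc sc' \<phi> \<and> bij \<phi> \<and>
          Ad \<phi> ` range (rep_V h \<gamma>) = range (rep_V h' \<gamma>')"
  then have lin: "Vector_Spaces.linear sc sc' \<phi>" and bij: "bij \<phi>"
    and range: "Ad \<phi> ` range (rep_V h \<gamma>) = range (rep_V h' \<gamma>')" by blast+
  define \<phi>0 where "\<phi>0 = inv (rep_V h' \<gamma>') \<circ> Ad \<phi> \<circ> rep_V h \<gamma>"
  have rep: "rep_V h' \<gamma>' (\<phi>0 v) = Ad \<phi> (rep_V h \<gamma> v)" for v
  proof -
    have "Ad \<phi> (rep_V h \<gamma> v) \<in> range (rep_V h' \<gamma>')" using range by blast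
    then show ?thesis by (simp add: \<phi>0_def f_inv_into_f)
  qed
  note intertwiner = assms(5-8) lin bij rep
  show "let \<phi>0 = inv (rep_V h' \<gamma>') \<circ> Ad \<phi> \<circ> rep_V h \<gamma>
        in isometry h h' \<phi>0 \<and> bij \<phi>0 \<and> clifford_rep_iso h h' sc sc' \<gamma> \<gamma>' \<phi>0 \<phi>"
    unfolding Let_def \<phi>0_def[symmetric]
    using intertwiner_isometry[OF intertwiner assms(1,2)] intertwiner_bij[OF intertwiner range]
      intertwiner_clifford_rep_iso[OF intertwiner assms(1,2) range]
    by blast
qed

end
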